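(* Let $f=p/q$ be a rational function, $p,q$ of degree $l$, positive on the standard simplex $\Delta$, with $b_\alpha(q,j,\Delta)>0$ for all $|\alpha|=j$, $j\ge l$, and with $p$ positive on $\Delta$; let $\underline p=\min_\Delta p$. If \[ k>\frac{l(l-1)}{2}\,\frac{\max_{|\alpha|=l}|b_\alpha(p,l,\Delta)|}{\underline p}, \] then $f$ satisfies the global certificate of positivity $\mathrm{Cert}(b(f,k,\Delta))$: $b_\alpha(f,k,\Delta)\ge0$ for all $|\alpha|=k$ and $b_{k\hat e_i}(f,k,\Delta)>0$ for $i=0,\dots,n$.
   Context: $\Delta$ is the standard simplex in $\mathbb{R}^n$ with barycentric coordinates $\lambda=(1-\sum x_i,x_1,\dots,x_n)$; $B^{(k)}_\alpha=\frac{k!}{\alpha_0!\cdots\alpha_n!}\lambda^\alpha$ ($\alpha\in\mathbb{N}^{n+1}$, $|\alpha|=k$); $b_\alpha(p,k,\Delta)$ are the Bernstein coefficients of $p$ of degree $k$; $b_\alpha(f,k,\Delta)=b_\alpha(p,k,\Delta)/b_\alpha(q,k,\Delta)$; $\hat e_i$ unit vectors of $\mathbb{R}^{n+1}$. *)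

theory Defs
  imports Complex_Main
begin

text \<open>Points of R^n are functions nat => real; only coordinates 1..n matter.
  Multi-indices in N^(n+1) are functions nat => nat supported in {0..n}.
  A polynomial in x_1..x_n is given by its monomial coefficients
  c :: (nat => nat) => real (exponent vector beta supported in {1..n}).\<close>

type_synonym mpoly = "(nat \<Rightarrow> nat) \<Rightarrow> real"

definition is_poly_deg :: "nat \<Rightarrow> nat \<Rightarrow> mpoly \<Rightarrow> bool" where
  "is_poly_deg n l c \<longleftrightarrow> finite {\<beta>. c \<beta> \<noteq> 0} \<and>
     (\<forall>\<beta>. c \<beta> \<noteq> 0 \<longrightarrow> (\<forall>i. i \<notin> {1..n} \<longrightarrow> \<beta> i = 0) \<and> (\<Sum>i=1..n. \<beta> i) \<le> l)"

definition peval :: "nat \<Rightarrow> mpoly \<Rightarrow> (nat \<Rightarrow> real) \<Rightarrow> real" where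
  "peval n c x = (\<Sum>\<beta>\<in>{\<beta>. c \<beta> \<noteq> 0}. c \<beta> * (\<Prod>i=1..n. x i ^ \<beta> i))"

definition std_simplex :: "nat \<Rightarrow> (nat \<Rightarrow> real) set" where
  "std_simplex n = {x. (\<forall>i\<in>{1..n}. 0 \<le> x i) \<and> (\<Sum>i=1..n. x i) \<le> 1 \<and>
                        (\<forall>i. i \<notin> {1..n} \<longrightarrow> x i = 0)}"

definition bary :: "nat \<Rightarrow> (nat \<Rightarrow> real) \<Rightarrow> nat \<Rightarrow> real" where
  "bary n x i = (if i = 0 then 1 - (\<Sum>j=1..n. x j) else x i)"

definition multi_idx :: "nat \<Rightarrow> nat \<Rightarrow> (nat \<Rightarrow> nat) set" where
  "multi_idx n k = {\<alpha>. (\<forall>i>n. \<alpha> i = 0) \<and> (\<Sum>i\<le>n. \<alpha> i) = k}"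

definition bernstein :: "nat \<Rightarrow> nat \<Rightarrow> (nat \<Rightarrow> nat) \<Rightarrow> (nat \<Rightarrow> real) \<Rightarrow> real" where
  "bernstein n k \<alpha> x = fact k / (\<Prod>i\<le>n. fact (\<alpha> i)) * (\<Prod>i\<le>n. bary n x i ^ \<alpha> i)"

definition bern_coeff :: "nat \<Rightarrow> mpoly \<Rightarrow> nat \<Rightarrow> (nat \<Rightarrow> nat) \<Rightarrow> real" where
  "bern_coeff n c k = (THE b. (\<forall>\<alpha>. \<alpha> \<notin> multi_idx n k \<longrightarrow> b \<alpha> = 0) \<and>
      (\<forall>x. peval n c x = (\<Sum>\<alpha>\<in>multi_idx n k. b \<alpha> * bernstein n k \<alpha> x)))"

definition vtx :: "nat \<Rightarrow> nat \<Rightarrow> nat \<Rightarrow> nat" where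
  "vtx k i = (\<lambda>j. if j = i then k else 0)"

end

theory Submission
  imports Defs "HOL-Analysis.Analysis"
begin

text \<open>Write \<open>p = \<Sum>\<^sub>\<alpha> b\<^sub>\<alpha> B\<^sub>\<alpha>\<^sup>(\<^sup>l\<^sup>)\<close> and elevate to degree \<open>k\<close>: \<open>b\<^sub>\<beta>(p,k) = \<Sum>\<^sub>\<alpha> b\<^sub>\<alpha> e\<^sub>\<alpha>\<^sub>\<beta>\<close> with weights
  \<open>e\<^sub>\<alpha>\<^sub>\<beta> = \<Prod> C(\<beta>\<^sub>i, \<alpha>\<^sub>i) / C(k, l)\<close> summing to \<open>1\<close>. At the grid point \<open>\<beta>/k\<close> the values
  \<open>B\<^sub>\<alpha>\<^sup>(\<^sup>l\<^sup>)(\<beta>/k)\<close> also sum to \<open>1\<close>, and \<open>k\<^sup>(\<^sup>l\<^sup>) e\<^sub>\<alpha>\<^sub>\<beta> \<le> k\<^sup>l B\<^sub>\<alpha>\<^sup>(\<^sup>l\<^sup>)(\<beta>/k)\<close> for the falling factorial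
  \<open>k\<^sup>(\<^sup>l\<^sup>) = k(k-1)\<cdots>(k-l+1)\<close>. Hence \<open>k\<^sup>(\<^sup>l\<^sup>) b\<^sub>\<beta>(p,k) \<ge> k\<^sup>l p(\<beta>/k) - M (k\<^sup>l - k\<^sup>(\<^sup>l\<^sup>))\<close> with
  \<open>M = max |b\<^sub>\<alpha>|\<close>, and since \<open>k (k\<^sup>l - k\<^sup>(\<^sup>l\<^sup>)) \<le> k\<^sup>l l(l-1)/2\<close> the coefficient is positive as soon as
  \<open>k min p > l(l-1)/2 M\<close>. The bound also forces \<open>k \<ge> l\<close>, so the coefficients of \<open>q\<close> are positive
  by hypothesis.\<close>

lemma sum_atMost_split_first:
  fixes f :: "nat \<Rightarrow> 'a::comm_monoid_add"
  shows "(\<Sum>i\<le>n. f i) = f 0 + (\<Sum>i=1..n. f i)"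
  by (simp add: atMost_atLeast0 sum.atLeast_Suc_atMost)

subsection \<open>Multi-indices and the multinomial theorem\<close>

lemma finite_multi_idx: "finite (multi_idx n k)"
proof -
  have "multi_idx n k \<subseteq> {f. \<forall>i. (i \<in> {..n} \<longrightarrow> f i \<in> {..k}) \<and> (i \<notin> {..n} \<longrightarrow> f i = 0)}"
  proof (clarsimp simp: multi_idx_def)
    fix f :: "nat \<Rightarrow> nat" and i assume "\<forall>i>n. f i = 0" "i \<le> n"
    then show "f i \<le> (\<Sum>i\<le>n. f i)" by (intro member_le_sum) auto
  qed
  then show ?thesis by (rule finite_subset) (rule finite_set_of_finite_funs; auto)
qed

lemma multi_idx_0: "multi_idx n 0 = {\<lambda>_. 0}"
  unfolding multi_idx_def by (auto simp: fun_eq_iff) (metis atMost_iff not_le)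

lemma vtx_in_multi_idx: "i \<le> n \<Longrightarrow> vtx k i \<in> multi_idx n k"
  unfolding multi_idx_def vtx_def by (auto simp: sum.delta)

lemma sum_multi_idx_shift:
  assumes "\<alpha> \<in> multi_idx n a"
  shows "(\<Sum>\<gamma>\<in>multi_idx n m. g (\<lambda>i. \<alpha> i + \<gamma> i)) =
         (\<Sum>\<beta>\<in>{\<beta>\<in>multi_idx n (a + m). \<forall>i. \<alpha> i \<le> \<beta> i}. g \<beta>)"
proof (rule sum.reindex_bij_witness[where i = "\<lambda>\<beta> i. \<beta> i - \<alpha> i" and j = "\<lambda>\<gamma> i. \<alpha> i + \<gamma> i"])
  fix \<gamma> assume "\<gamma> \<in> multi_idx n m"
  then show "(\<lambda>i. \<alpha> i + \<gamma> i) \<in> {\<beta>\<in>multi_idx n (a + m). \<forall>i. \<alpha> i \<le> \<beta> i}"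
    using assms by (auto simp: multi_idx_def sum.distrib)
next
  fix \<beta> assume \<beta>: "\<beta> \<in> {\<beta>\<in>multi_idx n (a + m). \<forall>i. \<alpha> i \<le> \<beta> i}"
  then have "(\<Sum>i\<le>n. \<beta> i - \<alpha> i) = (\<Sum>i\<le>n. \<beta> i) - (\<Sum>i\<le>n. \<alpha> i)"
    by (intro sum_subtractf_nat) auto
  then show "(\<lambda>i. \<beta> i - \<alpha> i) \<in> multi_idx n m"
    using \<beta> assms by (auto simp: multi_idx_def)
qed auto

definition monomial_fact :: "nat \<Rightarrow> (nat \<Rightarrow> real) \<Rightarrow> (nat \<Rightarrow> nat) \<Rightarrow> real" where
  "monomial_fact n y \<gamma> = (\<Prod>i\<le>n. y i ^ \<gamma> i / fact (\<gamma> i))"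

lemma monomial_fact_mult_var:
  assumes "j \<le> n"
  shows "monomial_fact n y \<gamma> * y j =
         monomial_fact n y (\<lambda>i. vtx 1 j i + \<gamma> i) * (real (\<gamma> j) + 1)"
proof -
  define R where "R = (\<Prod>i\<in>{..n}-{j}. y i ^ \<gamma> i / fact (\<gamma> i))"
  have "monomial_fact n y \<gamma> = y j ^ \<gamma> j / fact (\<gamma> j) * R"
    unfolding monomial_fact_def R_def using assms by (subst prod.remove[of _ j]) auto
  moreover have "monomial_fact n y (\<lambda>i. vtx 1 j i + \<gamma> i) = y j ^ Suc (\<gamma> j) / fact (Suc (\<gamma> j)) * R"
    unfolding monomial_fact_def R_def using assms
    by (subst prod.remove[of _ j]) (auto simp: vtx_def intro!: prod.cong)
  moreover have "a ^ g / fact g * R * a = a ^ Suc g / fact (Suc g) * R * (real g + 1)"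
    for a :: real and g :: nat
  proof -
    have "(real g + 1) * fact g \<noteq> (0::real)" by (simp add: add_pos_nonneg)
    then show ?thesis by (simp add: fact_Suc field_simps)
  qed
  ultimately show ?thesis by simp
qed

lemma multinomial_monomial_fact:
  "(\<Sum>\<gamma>\<in>multi_idx n m. monomial_fact n y \<gamma>) = (\<Sum>i\<le>n. y i) ^ m / fact m"
proof (induction m)
  case 0
  then show ?case by (simp add: multi_idx_0 monomial_fact_def)
next
  case (Suc m)
  have shift: "(\<Sum>\<gamma>\<in>multi_idx n m. monomial_fact n y \<gamma> * y j) =
      (\<Sum>\<beta>\<in>multi_idx n (Suc m). monomial_fact n y \<beta> * real (\<beta> j))" if j: "j \<le> n" for j
  proof -
    have "(\<Sum>\<gamma>\<in>multi_idx n m. monomial_fact n y \<gamma> * y j) =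
        (\<Sum>\<gamma>\<in>multi_idx n m. (\<lambda>\<beta>. monomial_fact n y \<beta> * real (\<beta> j)) (\<lambda>i. vtx 1 j i + \<gamma> i))"
      using j by (intro sum.cong refl) (simp add: monomial_fact_mult_var vtx_def)
    also have "\<dots> = (\<Sum>\<beta>\<in>{\<beta>\<in>multi_idx n (1 + m). \<forall>i. vtx 1 j i \<le> \<beta> i}. monomial_fact n y \<beta> * real (\<beta> j))"
      using j by (intro sum_multi_idx_shift vtx_in_multi_idx)
    also have "\<dots> = (\<Sum>\<beta>\<in>multi_idx n (Suc m). monomial_fact n y \<beta> * real (\<beta> j))"
      by (intro sum.mono_neutral_left finite_multi_idx) (auto simp: vtx_def split: if_splits)
    finally show ?thesis .
  qed
  have "(\<Sum>i\<le>n. y i) ^ Suc m / fact (Suc m) =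
      (\<Sum>i\<le>n. y i) ^ m / fact m * (\<Sum>j\<le>n. y j) / (real m + 1)"
    by (simp add: fact_Suc field_simps)
  also have "\<dots> = (\<Sum>j\<le>n. \<Sum>\<gamma>\<in>multi_idx n m. monomial_fact n y \<gamma> * y j) / (real m + 1)"
    by (simp add: Suc.IH[symmetric] sum_distrib_left sum_distrib_right)
  also have "\<dots> = (\<Sum>\<beta>\<in>multi_idx n (Suc m). monomial_fact n y \<beta> * real (\<Sum>j\<le>n. \<beta> j)) / (real m + 1)"
    by (simp add: shift sum_distrib_left sum.swap[of _ "{..n}"])
  also have "\<dots> = (\<Sum>\<beta>\<in>multi_idx n (Suc m). monomial_fact n y \<beta>)"
    by (simp add: multi_idx_def sum_divide_distrib[symmetric] sum_distrib_right[symmetric] add.commute)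
  finally show ?case ..
qed

lemma sum_bary: "(\<Sum>i\<le>n. bary n x i) = 1"
  by (simp add: sum_atMost_split_first bary_def)

lemma bernstein_eq_monomial_fact: "bernstein n k \<alpha> x = fact k * monomial_fact n (bary n x) \<alpha>"
  by (simp add: bernstein_def monomial_fact_def prod_dividef)

lemma sum_bernstein: "(\<Sum>\<alpha>\<in>multi_idx n k. bernstein n k \<alpha> x) = 1"
  by (simp add: bernstein_eq_monomial_fact sum_distrib_left[symmetric] multinomial_monomial_fact sum_bary)

lemma bernstein_nonneg: "x \<in> std_simplex n \<Longrightarrow> 0 \<le> bernstein n k \<alpha> x"
  unfolding bernstein_def std_simplex_def bary_def
  by (intro mult_nonneg_nonneg divide_nonneg_nonneg prod_nonneg zero_le_power) auto

subsection \<open>Uniqueness of Bernstein coefficients\<close>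

lemma poly_fun_zero_coeff:
  fixes a :: "nat \<Rightarrow> real"
  assumes "finite J" "\<And>t. (\<Sum>j\<in>J. a j * t ^ j) = 0" "j \<in> J"
  shows "a j = 0"
proof -
  define N where "N = Max J"
  have J: "J \<subseteq> {..N}" using assms(1) by (auto simp: N_def)
  have "\<forall>t::real. (\<Sum>i\<le>N. (if i \<in> J then a i else 0) * t ^ i) = 0"
  proof
    fix t :: real
    have "(\<Sum>i\<le>N. (if i \<in> J then a i else 0) * t ^ i) = (\<Sum>i\<le>N. if i \<in> J then a i * t ^ i else 0)"
      by (intro sum.cong) auto
    also have "\<dots> = (\<Sum>i\<in>{..N} \<inter> J. a i * t ^ i)"
      by (simp add: sum.inter_restrict)
    also have "{..N} \<inter> J = J" using J by auto
    finally show "(\<Sum>i\<le>N. (if i \<in> J then a i else 0) * t ^ i) = 0" using assms(2) by simp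
  qed
  then have "\<forall>i\<le>N. (if i \<in> J then a i else 0) = 0" by (subst (asm) polyfun_eq_0)
  then show ?thesis using assms(3) J by force
qed

lemma sum_monomials_group_by_exponent:
  fixes c :: "(nat \<Rightarrow> nat) \<Rightarrow> real" and y :: "nat \<Rightarrow> real"
  assumes "finite S" "finite I" "m \<notin> I"
  shows "(\<Sum>\<gamma>\<in>S. c \<gamma> * (\<Prod>i\<in>insert m I. y i ^ \<gamma> i)) =
         (\<Sum>j\<in>(\<lambda>\<gamma>. \<gamma> m) ` S. (\<Sum>\<gamma>\<in>{\<gamma>\<in>S. \<gamma> m = j}. c \<gamma> * (\<Prod>i\<in>I. y i ^ \<gamma> i)) * y m ^ j)"
proof -
  have "(\<Sum>\<gamma>\<in>S. c \<gamma> * (\<Prod>i\<in>insert m I. y i ^ \<gamma> i)) =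
        (\<Sum>j\<in>(\<lambda>\<gamma>. \<gamma> m) ` S. \<Sum>\<gamma>\<in>{\<gamma>\<in>S. \<gamma> m = j}. c \<gamma> * (\<Prod>i\<in>insert m I. y i ^ \<gamma> i))"
    using assms(1) by (intro sum.group[symmetric]) auto
  also have "\<dots> = (\<Sum>j\<in>(\<lambda>\<gamma>. \<gamma> m) ` S. (\<Sum>\<gamma>\<in>{\<gamma>\<in>S. \<gamma> m = j}. c \<gamma> * (\<Prod>i\<in>I. y i ^ \<gamma> i)) * y m ^ j)"
  proof (rule sum.cong[OF refl])
    fix j
    show "(\<Sum>\<gamma>\<in>{\<gamma>\<in>S. \<gamma> m = j}. c \<gamma> * (\<Prod>i\<in>insert m I. y i ^ \<gamma> i)) =
          (\<Sum>\<gamma>\<in>{\<gamma>\<in>S. \<gamma> m = j}. c \<gamma> * (\<Prod>i\<in>I. y i ^ \<gamma> i)) * y m ^ j"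
      unfolding sum_distrib_right using assms(2,3) by (intro sum.cong refl) (simp add: mult_ac)
  qed
  finally show ?thesis .
qed

text \<open>Split off one variable and apply the univariate case to the coefficients of its powers.\<close>

lemma poly_fun_zero_coeffs:
  assumes "finite I" "finite S" "\<forall>\<gamma>\<in>S. \<forall>i. i \<notin> I \<longrightarrow> \<gamma> i = 0"
    and "\<And>y::nat \<Rightarrow> real. (\<Sum>\<gamma>\<in>S. c \<gamma> * (\<Prod>i\<in>I. y i ^ \<gamma> i)) = 0" and "\<gamma> \<in> S"
  shows "c \<gamma> = 0"
  using assms
proof (induction I arbitrary: S c \<gamma> rule: finite_induct)
  case empty
  then have "S \<subseteq> {\<lambda>_. 0}" by (auto simp: fun_eq_iff)
  then have "S = {\<gamma>}" using empty.prems(4) by (metis empty_iff singletonD subset_singletonD)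
  then show ?case using empty.prems(3)[of undefined] by simp
next
  case (insert m I S c \<gamma>)
  define j where "j = \<gamma> m"
  define A where "A = (\<lambda>j y. \<Sum>\<gamma>\<in>{\<gamma>\<in>S. \<gamma> m = j}. c \<gamma> * (\<Prod>i\<in>I. y i ^ \<gamma> i))"
  have A0: "A j y = 0" for y
  proof (rule poly_fun_zero_coeff[of "(\<lambda>\<gamma>. \<gamma> m) ` S" "\<lambda>j. A j y"])
    have upd: "(\<Prod>i\<in>I. (y(m := t)) i ^ \<gamma> i) = (\<Prod>i\<in>I. y i ^ \<gamma> i)" for t \<gamma>
      using insert.hyps(2) by (intro prod.cong) auto
    show "(\<Sum>j\<in>(\<lambda>\<gamma>. \<gamma> m) ` S. A j y * t ^ j) = 0" for t
      using insert.prems(3)[of "y(m := t)"]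
      unfolding sum_monomials_group_by_exponent[OF insert.prems(1) insert.hyps(1,2)] A_def
      by (simp only: upd fun_upd_same)
  qed (use insert.prems(1,4) j_def in auto)
  define S' where "S' = (\<lambda>\<gamma>. \<gamma>(m := 0)) ` {\<gamma>\<in>S. \<gamma> m = j}"
  have inj: "inj_on (\<lambda>\<gamma>. \<gamma>(m := 0)) {\<gamma>\<in>S. \<gamma> m = j}"
    by (rule inj_onI) (metis (mono_tags, lifting) fun_upd_triv fun_upd_upd mem_Collect_eq)
  have "c ((\<gamma>(m := 0))(m := j)) = 0"
  proof (rule insert.IH[of S' "\<lambda>\<gamma>'. c (\<gamma>'(m := j))"])
    show "finite S'" using insert.prems(1) by (simp add: S'_def)
    show "\<forall>\<gamma>\<in>S'. \<forall>i. i \<notin> I \<longrightarrow> \<gamma> i = 0" using insert.prems(2) by (auto simp: S'_def)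
    show "\<gamma>(m := 0) \<in> S'" using insert.prems(4) by (auto simp: S'_def j_def)
    fix y :: "nat \<Rightarrow> real"
    have "(\<Sum>\<gamma>'\<in>S'. c (\<gamma>'(m := j)) * (\<Prod>i\<in>I. y i ^ \<gamma>' i)) =
        (\<Sum>\<gamma>\<in>{\<gamma>\<in>S. \<gamma> m = j}. c ((\<gamma>(m := 0))(m := j)) * (\<Prod>i\<in>I. y i ^ (\<gamma>(m := 0)) i))"
      unfolding S'_def by (rule sum.reindex[OF inj, unfolded comp_def])
    also have "\<dots> = A j y"
      unfolding A_def using insert.hyps(2)
      by (intro sum.cong refl arg_cong2[where f = "(*)"] prod.cong) auto
    finally show "(\<Sum>\<gamma>'\<in>S'. c (\<gamma>'(m := j)) * (\<Prod>i\<in>I. y i ^ \<gamma>' i)) = 0"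
      using A0 by simp
  qed
  then show ?case by (simp add: j_def)
qed

lemma prod_power_multi_idx: "\<alpha> \<in> multi_idx n k \<Longrightarrow> (\<Prod>i\<le>n. s ^ \<alpha> i) = s ^ k"
  by (simp add: power_sum[symmetric] multi_idx_def)

lemma bary_normalized:
  assumes "(\<Sum>i\<le>n. y i) \<noteq> 0" "i \<le> n"
  shows "bary n (\<lambda>i. if i \<in> {1..n} then y i / (\<Sum>i\<le>n. y i) else 0) i = y i / (\<Sum>i\<le>n. y i)"
proof (cases "i = 0")
  case True
  have "(\<Sum>j=1..n. (if j \<in> {1..n} then y j / (\<Sum>i\<le>n. y i) else 0)) = (\<Sum>j=1..n. y j) / (\<Sum>i\<le>n. y i)"
    by (simp add: sum_divide_distrib)
  with True assms(1) show ?thesis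
    by (simp add: bary_def sum_atMost_split_first field_simps)
qed (use assms(2) in \<open>simp add: bary_def\<close>)

lemma form_at_bary_normalized:
  assumes "(\<Sum>i\<le>n. y i) \<noteq> 0"
  shows "(\<Sum>\<alpha>\<in>multi_idx n k. c \<alpha> * (\<Prod>i\<le>n. bary n (\<lambda>i. if i \<in> {1..n} then y i / (\<Sum>i\<le>n. y i) else 0) i ^ \<alpha> i))
       = (\<Sum>\<alpha>\<in>multi_idx n k. c \<alpha> * (\<Prod>i\<le>n. y i ^ \<alpha> i)) / (\<Sum>i\<le>n. y i) ^ k"
proof -
  have "(\<Prod>i\<le>n. bary n (\<lambda>i. if i \<in> {1..n} then y i / (\<Sum>i\<le>n. y i) else 0) i ^ \<alpha> i) =
      (\<Prod>i\<le>n. y i ^ \<alpha> i) / (\<Sum>i\<le>n. y i) ^ k" if "\<alpha> \<in> multi_idx n k" for \<alpha>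
    using bary_normalized[OF assms]
    by (simp add: power_divide prod_dividef prod_power_multi_idx[OF that])
  then show ?thesis by (simp add: sum_divide_distrib)
qed

text \<open>A form of degree \<open>k\<close> in \<open>y\<^sub>0, \<dots>, y\<^sub>n\<close> vanishing on the hyperplane \<open>\<Sum> y\<^sub>i = 1\<close> vanishes off
  the hyperplane \<open>\<Sum> y\<^sub>i = 0\<close> by homogeneity, hence everywhere by continuity.\<close>

lemma form_zero_if_zero_on_bary:
  fixes c :: "(nat \<Rightarrow> nat) \<Rightarrow> real"
  assumes "\<And>x. (\<Sum>\<alpha>\<in>multi_idx n k. c \<alpha> * (\<Prod>i\<le>n. bary n x i ^ \<alpha> i)) = 0"
  shows "(\<Sum>\<alpha>\<in>multi_idx n k. c \<alpha> * (\<Prod>i\<le>n. y i ^ \<alpha> i)) = 0"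
proof -
  define H where "H = (\<lambda>y::nat \<Rightarrow> real. \<Sum>\<alpha>\<in>multi_idx n k. c \<alpha> * (\<Prod>i\<le>n. y i ^ \<alpha> i))"
  have H_off: "H y = 0" if "(\<Sum>i\<le>n. y i) \<noteq> 0" for y
    using form_at_bary_normalized[OF that, where k = k and c = c] assms that by (simp add: H_def)
  show ?thesis
  proof (cases "(\<Sum>i\<le>n. y i) = 0")
    case True
    define g where "g = (\<lambda>t. H (y(0 := y 0 + t)))"
    have "continuous_on UNIV (\<lambda>t::real. if i = 0 then y 0 + t else y i)" for i
      by (cases "i = 0") (auto intro!: continuous_intros)
    then have "continuous_on UNIV g"
      unfolding g_def H_def fun_upd_def by (intro continuous_intros)
    then have "(g \<longlongrightarrow> g 0) (at 0)" by (simp add: continuous_on_def)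
    moreover have "(g \<longlongrightarrow> 0) (at 0)"
    proof (rule tendsto_eventually)
      have "(\<Sum>i\<le>n. (y(0 := y 0 + t)) i) = t" for t
        using True by (simp add: sum_atMost_split_first)
      then have "t \<noteq> 0 \<Longrightarrow> g t = 0" for t
        by (auto simp: g_def intro!: H_off)
      moreover have "\<forall>\<^sub>F t in at (0::real). t \<noteq> 0" by (simp add: eventually_at_filter)
      ultimately show "\<forall>\<^sub>F t in at 0. g t = 0" by (auto elim: eventually_mono)
    qed
    ultimately have "g 0 = 0" by (rule tendsto_unique[rotated]) simp
    then show ?thesis by (simp add: g_def H_def del: fun_upd_apply)
  qed (simp add: H_off[unfolded H_def])
qed

lemma bernstein_coeffs_unique:
  assumes "\<And>x. (\<Sum>\<alpha>\<in>multi_idx n k. d \<alpha> * bernstein n k \<alpha> x) = (\<Sum>\<alpha>\<in>multi_idx n k. e \<alpha> * bernstein n k \<alpha> x)"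
    and "\<alpha> \<in> multi_idx n k"
  shows "d \<alpha> = e \<alpha>"
proof -
  define c where "c = (\<lambda>\<alpha>. (d \<alpha> - e \<alpha>) * (fact k / (\<Prod>i\<le>n. fact (\<alpha> i))))"
  have "(\<Sum>\<alpha>\<in>multi_idx n k. c \<alpha> * (\<Prod>i\<le>n. bary n x i ^ \<alpha> i)) =
      (\<Sum>\<alpha>\<in>multi_idx n k. d \<alpha> * bernstein n k \<alpha> x) - (\<Sum>\<alpha>\<in>multi_idx n k. e \<alpha> * bernstein n k \<alpha> x)" for x
    by (simp add: c_def bernstein_def sum_subtractf[symmetric] algebra_simps diff_divide_distrib)
  then have "(\<Sum>\<alpha>\<in>multi_idx n k. c \<alpha> * (\<Prod>i\<le>n. bary n x i ^ \<alpha> i)) = 0" for x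
    by (simp only: assms(1) diff_self)
  then have form_zero: "(\<Sum>\<alpha>\<in>multi_idx n k. c \<alpha> * (\<Prod>i\<in>{..n}. y i ^ \<alpha> i)) = 0" for y
    by (rule form_zero_if_zero_on_bary)
  have "c \<alpha> = 0"
  proof (rule poly_fun_zero_coeffs[of "{..n}" "multi_idx n k" c \<alpha>])
    show "\<forall>\<gamma>\<in>multi_idx n k. \<forall>i. i \<notin> {..n} \<longrightarrow> \<gamma> i = 0" by (auto simp: multi_idx_def)
  qed (use form_zero assms(2) finite_multi_idx in auto)
  then show ?thesis by (simp add: c_def)
qed

lemma bern_coeff_eqI:
  assumes "\<And>\<alpha>. \<alpha> \<notin> multi_idx n k \<Longrightarrow> d \<alpha> = 0"
    and "\<And>x. peval n c x = (\<Sum>\<alpha>\<in>multi_idx n k. d \<alpha> * bernstein n k \<alpha> x)"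
  shows "bern_coeff n c k = d"
  unfolding bern_coeff_def
proof (rule the_equality)
  fix b assume b: "(\<forall>\<alpha>. \<alpha> \<notin> multi_idx n k \<longrightarrow> b \<alpha> = 0) \<and>
    (\<forall>x. peval n c x = (\<Sum>\<alpha>\<in>multi_idx n k. b \<alpha> * bernstein n k \<alpha> x))"
  have "(\<Sum>\<alpha>\<in>multi_idx n k. b \<alpha> * bernstein n k \<alpha> x) = (\<Sum>\<alpha>\<in>multi_idx n k. d \<alpha> * bernstein n k \<alpha> x)" for x
    using b assms(2)[of x] by simp
  then have "b \<alpha> = d \<alpha>" if "\<alpha> \<in> multi_idx n k" for \<alpha>
    using that by (rule bernstein_coeffs_unique)
  then have "b \<alpha> = d \<alpha>" for \<alpha>
    using b assms(1) by (cases "\<alpha> \<in> multi_idx n k") auto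
  then show "b = d" ..
qed (use assms in auto)

subsection \<open>Existence of Bernstein coefficients\<close>

definition has_bernstein_rep :: "nat \<Rightarrow> nat \<Rightarrow> ((nat \<Rightarrow> real) \<Rightarrow> real) \<Rightarrow> bool" where
  "has_bernstein_rep n k f \<longleftrightarrow> (\<exists>d. \<forall>x. f x = (\<Sum>\<alpha>\<in>multi_idx n k. d \<alpha> * bernstein n k \<alpha> x))"

lemma has_bernstein_rep_zero: "has_bernstein_rep n k (\<lambda>x. 0)"
  unfolding has_bernstein_rep_def by (rule exI[of _ "\<lambda>_. 0"]) simp

lemma has_bernstein_rep_add:
  assumes "has_bernstein_rep n k f" "has_bernstein_rep n k g"
  shows "has_bernstein_rep n k (\<lambda>x. f x + g x)"
proof -
  obtain d e where "\<And>x. f x = (\<Sum>\<alpha>\<in>multi_idx n k. d \<alpha> * bernstein n k \<alpha> x)"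
    "\<And>x. g x = (\<Sum>\<alpha>\<in>multi_idx n k. e \<alpha> * bernstein n k \<alpha> x)"
    using assms unfolding has_bernstein_rep_def by blast
  then show ?thesis unfolding has_bernstein_rep_def
    by (intro exI[of _ "\<lambda>\<alpha>. d \<alpha> + e \<alpha>"]) (simp add: distrib_right sum.distrib)
qed

lemma has_bernstein_rep_scale:
  assumes "has_bernstein_rep n k f"
  shows "has_bernstein_rep n k (\<lambda>x. c * f x)"
proof -
  obtain d where "\<And>x. f x = (\<Sum>\<alpha>\<in>multi_idx n k. d \<alpha> * bernstein n k \<alpha> x)"
    using assms unfolding has_bernstein_rep_def by blast
  then show ?thesis unfolding has_bernstein_rep_def
    by (intro exI[of _ "\<lambda>\<alpha>. c * d \<alpha>"]) (simp add: sum_distrib_left mult.assoc)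
qed

lemma has_bernstein_rep_sum:
  "finite A \<Longrightarrow> (\<And>a. a \<in> A \<Longrightarrow> has_bernstein_rep n k (f a)) \<Longrightarrow>
   has_bernstein_rep n k (\<lambda>x. \<Sum>a\<in>A. f a x)"
  by (induction A rule: finite_induct) (auto intro: has_bernstein_rep_zero has_bernstein_rep_add)

lemma has_bernstein_rep_bary_monomial:
  assumes "\<alpha> \<in> multi_idx n k"
  shows "has_bernstein_rep n k (\<lambda>x. \<Prod>i\<le>n. bary n x i ^ \<alpha> i)"
  unfolding has_bernstein_rep_def
proof (intro exI allI)
  fix x
  have "(\<Prod>i\<le>n. bary n x i ^ \<alpha> i) = (\<Prod>i\<le>n. fact (\<alpha> i)) / fact k * bernstein n k \<alpha> x"
    by (simp add: bernstein_def)
  also have "\<dots> = (\<Sum>\<beta>\<in>multi_idx n k. (if \<beta> = \<alpha> then (\<Prod>i\<le>n. fact (\<alpha> i)) / fact k else 0) * bernstein n k \<beta> x)"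
    by (subst sum.remove[OF finite_multi_idx assms]) simp
  finally show "(\<Prod>i\<le>n. bary n x i ^ \<alpha> i) = \<dots>" .
qed

text \<open>Homogenize with the factor \<open>1 = (\<Sum>\<^sub>i \<lambda>\<^sub>i)\<^sup>m\<close>, \<open>m = l - |\<beta>|\<close>, expanded by the multinomial theorem.\<close>

lemma has_bernstein_rep_monomial:
  assumes "\<And>i. i \<notin> {1..n} \<Longrightarrow> \<beta> i = 0" "(\<Sum>i=1..n. \<beta> i) \<le> l"
  shows "has_bernstein_rep n l (\<lambda>x. \<Prod>i=1..n. x i ^ \<beta> i)"
proof -
  define m where "m = l - (\<Sum>i=1..n. \<beta> i)"
  have \<beta>0: "\<beta> 0 = 0" using assms(1) by auto
  have \<beta>: "\<beta> \<in> multi_idx n (\<Sum>i=1..n. \<beta> i)"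
    using assms(1) \<beta>0 by (auto simp: multi_idx_def sum_atMost_split_first)
  have "(\<Prod>i=1..n. x i ^ \<beta> i) = (\<Sum>\<gamma>\<in>multi_idx n m. fact m / (\<Prod>i\<le>n. fact (\<gamma> i)) *
          (\<Prod>i\<le>n. bary n x i ^ (\<beta> i + \<gamma> i)))" for x
  proof -
    have "(\<Prod>i=1..n. x i ^ \<beta> i) = (\<Prod>i\<le>n. bary n x i ^ \<beta> i)"
      using \<beta>0 by (simp add: atMost_atLeast0 prod.atLeast_Suc_atMost bary_def)
    also have "\<dots> = (\<Prod>i\<le>n. bary n x i ^ \<beta> i) * (fact m * (\<Sum>\<gamma>\<in>multi_idx n m. monomial_fact n (bary n x) \<gamma>))"
      by (simp add: multinomial_monomial_fact sum_bary)
    also have "\<dots> = (\<Sum>\<gamma>\<in>multi_idx n m. fact m / (\<Prod>i\<le>n. fact (\<gamma> i)) *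
          (\<Prod>i\<le>n. bary n x i ^ (\<beta> i + \<gamma> i)))"
      by (simp add: sum_distrib_left monomial_fact_def prod_dividef power_add prod.distrib mult_ac)
    finally show ?thesis .
  qed
  moreover have "has_bernstein_rep n l (\<lambda>x. \<Sum>\<gamma>\<in>multi_idx n m. fact m / (\<Prod>i\<le>n. fact (\<gamma> i)) *
          (\<Prod>i\<le>n. bary n x i ^ (\<beta> i + \<gamma> i)))"
  proof (intro has_bernstein_rep_sum finite_multi_idx has_bernstein_rep_scale has_bernstein_rep_bary_monomial)
    fix \<gamma> assume "\<gamma> \<in> multi_idx n m"
    then show "(\<lambda>i. \<beta> i + \<gamma> i) \<in> multi_idx n l"
      using \<beta> assms(2) by (auto simp: multi_idx_def sum.distrib m_def)
  qed
  ultimately show ?thesis by simp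
qed

lemma has_bernstein_rep_peval: "is_poly_deg n l c \<Longrightarrow> has_bernstein_rep n l (peval n c)"
  unfolding is_poly_deg_def peval_def[abs_def]
  by (intro has_bernstein_rep_sum has_bernstein_rep_scale has_bernstein_rep_monomial) auto

lemma peval_eq_sum_bern_coeff:
  assumes "is_poly_deg n l c"
  shows "peval n c x = (\<Sum>\<alpha>\<in>multi_idx n l. bern_coeff n c l \<alpha> * bernstein n l \<alpha> x)"
proof -
  obtain d where d: "\<And>x. peval n c x = (\<Sum>\<alpha>\<in>multi_idx n l. d \<alpha> * bernstein n l \<alpha> x)"
    using has_bernstein_rep_peval[OF assms] unfolding has_bernstein_rep_def by blast
  define d' where "d' = (\<lambda>\<alpha>. if \<alpha> \<in> multi_idx n l then d \<alpha> else 0)"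
  have "peval n c x = (\<Sum>\<alpha>\<in>multi_idx n l. d' \<alpha> * bernstein n l \<alpha> x)" for x
    unfolding d d'_def by (intro sum.cong) auto
  moreover from this have "bern_coeff n c l = d'"
    by (intro bern_coeff_eqI) (auto simp: d'_def)
  ultimately show ?thesis by simp
qed

lemma peval_le_of_bern_coeff_le:
  assumes "is_poly_deg n l c" "x \<in> std_simplex n" "\<And>\<alpha>. \<alpha> \<in> multi_idx n l \<Longrightarrow> bern_coeff n c l \<alpha> \<le> M"
  shows "peval n c x \<le> M"
proof -
  have "peval n c x \<le> (\<Sum>\<alpha>\<in>multi_idx n l. M * bernstein n l \<alpha> x)"
    unfolding peval_eq_sum_bern_coeff[OF assms(1)]
    by (intro sum_mono mult_right_mono assms(3) bernstein_nonneg[OF assms(2)])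
  then show ?thesis by (simp add: sum_distrib_left[symmetric] sum_bernstein)
qed

subsection \<open>Degree elevation\<close>

definition falling_fact :: "nat \<Rightarrow> nat \<Rightarrow> real" where
  "falling_fact m a = (\<Prod>j<a. real m - real j)"

lemma falling_fact_Suc: "falling_fact m (Suc a) = falling_fact m a * (real m - real a)"
  by (simp add: falling_fact_def)

lemma falling_fact_eq_fact_div: "a \<le> m \<Longrightarrow> falling_fact m a = fact m / fact (m - a)"
proof (induction a)
  case 0
  then show ?case by (simp add: falling_fact_def)
next
  case (Suc a)
  have "fact (m - a) = real (m - a) * (fact (m - Suc a) :: real)"
    using Suc.prems by (metis Suc_diff_Suc fact_Suc less_eq_Suc_le of_nat_Suc diff_Suc_Suc)
  then show ?case
    using Suc by (simp add: falling_fact_Suc of_nat_diff)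
qed

lemma falling_fact_eq_0: "m < a \<Longrightarrow> falling_fact m a = 0"
  unfolding falling_fact_def by (rule prod_zero) auto

lemma falling_fact_nonneg: "0 \<le> falling_fact m a"
  by (cases "a \<le> m") (auto simp: falling_fact_eq_fact_div falling_fact_eq_0)

lemma falling_fact_pos: "a \<le> m \<Longrightarrow> 0 < falling_fact m a"
  by (simp add: falling_fact_eq_fact_div)

lemma falling_fact_le_power: "falling_fact m a \<le> real m ^ a"
proof -
  have "falling_fact m a \<le> (\<Prod>j<a. real m)" if "a \<le> m"
    unfolding falling_fact_def using that by (intro prod_mono) auto
  then show ?thesis by (cases "a \<le> m") (auto simp: falling_fact_eq_0)
qed

text \<open>The deficit of \<open>m\<^sup>a\<close> over the falling factorial is at most \<open>m\<^sup>a\<^sup>-\<^sup>1 a(a-1)/2\<close>, stated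
  multiplied by \<open>m\<close> to avoid the exponent \<open>a - 1\<close>.\<close>

lemma power_minus_falling_fact_le:
  "real m * (real m ^ a - falling_fact m a) \<le> real m ^ a * (real (a * (a - 1)) / 2)"
proof (induction a)
  case 0
  then show ?case by (simp add: falling_fact_def)
next
  case (Suc a)
  have triangle: "real (Suc a * (Suc a - 1)) / 2 = real (a * (a - 1)) / 2 + real a"
    by (cases a) (auto simp: field_simps)
  have "real m * (real m ^ Suc a - falling_fact m (Suc a)) =
      real m * (real m * (real m ^ a - falling_fact m a)) + real m * real a * falling_fact m a"
    by (simp add: falling_fact_Suc algebra_simps)
  also have "\<dots> \<le> real m * (real m ^ a * (real (a * (a - 1)) / 2)) + real m * real a * real m ^ a"
    by (intro add_mono mult_left_mono Suc.IH falling_fact_le_power) auto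
  also have "\<dots> = real m ^ Suc a * (real (Suc a * (Suc a - 1)) / 2)"
    by (simp only: triangle) (simp add: field_simps)
  finally show ?case .
qed

text \<open>Since \<open>falling_fact \<beta>\<^sub>i \<alpha>\<^sub>i / \<beta>\<^sub>i! = 1 / (\<beta>\<^sub>i - \<alpha>\<^sub>i)!\<close> (and \<open>0\<close> if \<open>\<beta>\<^sub>i < \<alpha>\<^sub>i\<close>), this is the
  multinomial theorem shifted by \<open>\<alpha>\<close>.\<close>

lemma sum_falling_fact_monomials:
  assumes "\<alpha> \<in> multi_idx n l" "l \<le> k"
  shows "(\<Sum>\<beta>\<in>multi_idx n k. (\<Prod>i\<le>n. falling_fact (\<beta> i) (\<alpha> i) / fact (\<beta> i)) * (\<Prod>i\<le>n. y i ^ \<beta> i)) =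
         (\<Prod>i\<le>n. y i ^ \<alpha> i) * (\<Sum>i\<le>n. y i) ^ (k - l) / fact (k - l)"
proof -
  define g where "g = (\<lambda>\<beta>. (\<Prod>i\<le>n. falling_fact (\<beta> i) (\<alpha> i) / fact (\<beta> i)) * (\<Prod>i\<le>n. y i ^ \<beta> i))"
  have "(\<Prod>i\<le>n. y i ^ \<alpha> i) * (\<Sum>i\<le>n. y i) ^ (k - l) / fact (k - l) =
      (\<Sum>\<gamma>\<in>multi_idx n (k - l). (\<Prod>i\<le>n. y i ^ \<alpha> i) * monomial_fact n y \<gamma>)"
    by (simp add: sum_distrib_left[symmetric] multinomial_monomial_fact)
  also have "\<dots> = (\<Sum>\<gamma>\<in>multi_idx n (k - l). g (\<lambda>i. \<alpha> i + \<gamma> i))"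
    by (intro sum.cong refl)
      (simp add: g_def monomial_fact_def falling_fact_eq_fact_div prod_dividef power_add prod.distrib)
  also have "\<dots> = (\<Sum>\<beta>\<in>{\<beta>\<in>multi_idx n (l + (k - l)). \<forall>i. \<alpha> i \<le> \<beta> i}. g \<beta>)"
    by (rule sum_multi_idx_shift[OF assms(1)])
  also have "\<dots> = (\<Sum>\<beta>\<in>multi_idx n k. g \<beta>)"
  proof (rule sum.mono_neutral_left[OF finite_multi_idx])
    show "\<forall>\<beta>\<in>multi_idx n k - {\<beta>\<in>multi_idx n (l + (k - l)). \<forall>i. \<alpha> i \<le> \<beta> i}. g \<beta> = 0"
    proof
      fix \<beta> assume "\<beta> \<in> multi_idx n k - {\<beta>\<in>multi_idx n (l + (k - l)). \<forall>i. \<alpha> i \<le> \<beta> i}"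
      then obtain i where i: "\<beta> i < \<alpha> i" using assms(2) by (auto simp: not_le)
      then have "i \<le> n" using assms(1) by (auto simp: multi_idx_def not_le[symmetric])
      then show "g \<beta> = 0"
        using i unfolding g_def by (subst prod_zero[of "{..n}"]) (auto intro!: bexI[of _ i] simp: falling_fact_eq_0)
    qed
  qed (use assms(2) in auto)
  finally show ?thesis by (simp add: g_def)
qed

text \<open>On \<open>multi_idx n k\<close> this is the familiar \<open>\<Prod>\<^sub>i C(\<beta>\<^sub>i, \<alpha>\<^sub>i) / C(k, l)\<close>.\<close>

definition elev_coeff :: "nat \<Rightarrow> nat \<Rightarrow> nat \<Rightarrow> (nat \<Rightarrow> nat) \<Rightarrow> (nat \<Rightarrow> nat) \<Rightarrow> real" where
  "elev_coeff n l k \<alpha> \<beta> = (if \<beta> \<in> multi_idx n k then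
     fact l / (\<Prod>i\<le>n. fact (\<alpha> i)) * (\<Prod>i\<le>n. falling_fact (\<beta> i) (\<alpha> i)) / falling_fact k l else 0)"

lemma bernstein_degree_elevation:
  assumes "\<alpha> \<in> multi_idx n l" "l \<le> k"
  shows "bernstein n l \<alpha> x = (\<Sum>\<beta>\<in>multi_idx n k. elev_coeff n l k \<alpha> \<beta> * bernstein n k \<beta> x)"
proof -
  define C where "C = fact l / (\<Prod>i\<le>n. fact (\<alpha> i)) * (fact k / falling_fact k l :: real)"
  have "(\<Sum>\<beta>\<in>multi_idx n k. elev_coeff n l k \<alpha> \<beta> * bernstein n k \<beta> x) =
      (\<Sum>\<beta>\<in>multi_idx n k. C * ((\<Prod>i\<le>n. falling_fact (\<beta> i) (\<alpha> i) / fact (\<beta> i)) * (\<Prod>i\<le>n. bary n x i ^ \<beta> i)))"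
    by (intro sum.cong refl) (simp add: elev_coeff_def bernstein_def C_def prod_dividef)
  also have "\<dots> = C * ((\<Prod>i\<le>n. bary n x i ^ \<alpha> i) / fact (k - l))"
    by (simp add: sum_distrib_left[symmetric] sum_falling_fact_monomials[OF assms] sum_bary)
  also have "\<dots> = bernstein n l \<alpha> x"
    using assms(2) by (simp add: C_def bernstein_def falling_fact_eq_fact_div)
  finally show ?thesis ..
qed

lemma bern_coeff_degree_elevation:
  assumes "is_poly_deg n l c" "l \<le> k"
  shows "bern_coeff n c k \<beta> = (\<Sum>\<alpha>\<in>multi_idx n l. bern_coeff n c l \<alpha> * elev_coeff n l k \<alpha> \<beta>)"
proof -
  have "peval n c x = (\<Sum>\<beta>\<in>multi_idx n k. (\<Sum>\<alpha>\<in>multi_idx n l. bern_coeff n c l \<alpha> * elev_coeff n l k \<alpha> \<beta>) *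
      bernstein n k \<beta> x)" for x
    unfolding peval_eq_sum_bern_coeff[OF assms(1)]
    by (simp add: bernstein_degree_elevation[OF _ assms(2)] sum_distrib_left sum_distrib_right
        sum.swap[of _ "multi_idx n k"] mult.assoc)
  then have "bern_coeff n c k = (\<lambda>\<beta>. \<Sum>\<alpha>\<in>multi_idx n l. bern_coeff n c l \<alpha> * elev_coeff n l k \<alpha> \<beta>)"
    by (intro bern_coeff_eqI) (simp_all add: elev_coeff_def)
  then show ?thesis by simp
qed

lemma sum_elev_coeff:
  assumes "\<beta> \<in> multi_idx n k" "l \<le> k"
  shows "(\<Sum>\<alpha>\<in>multi_idx n l. elev_coeff n l k \<alpha> \<beta>) = 1"
proof -
  have "(\<Sum>\<beta>\<in>multi_idx n k. (\<Sum>\<alpha>\<in>multi_idx n l. elev_coeff n l k \<alpha> \<beta>) * bernstein n k \<beta> x) =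
      (\<Sum>\<beta>\<in>multi_idx n k. 1 * bernstein n k \<beta> x)" for x
  proof -
    have "(\<Sum>\<beta>\<in>multi_idx n k. (\<Sum>\<alpha>\<in>multi_idx n l. elev_coeff n l k \<alpha> \<beta>) * bernstein n k \<beta> x) =
        (\<Sum>\<alpha>\<in>multi_idx n l. bernstein n l \<alpha> x)"
      by (simp add: bernstein_degree_elevation[OF _ assms(2)] sum_distrib_right sum.swap[of _ "multi_idx n k"])
    then show ?thesis by (simp add: sum_bernstein)
  qed
  then show ?thesis using assms(1) by (rule bernstein_coeffs_unique)
qed

subsection \<open>Positivity of elevated coefficients\<close>

definition grid_point :: "nat \<Rightarrow> nat \<Rightarrow> (nat \<Rightarrow> nat) \<Rightarrow> nat \<Rightarrow> real" where
  "grid_point n k \<beta> = (\<lambda>i. if i \<in> {1..n} then real (\<beta> i) / real k else 0)"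

lemma sum_grid_point:
  assumes "\<beta> \<in> multi_idx n k" "0 < k"
  shows "(\<Sum>i=1..n. grid_point n k \<beta> i) = 1 - real (\<beta> 0) / real k"
proof -
  have "real k = real (\<beta> 0) + (\<Sum>i=1..n. real (\<beta> i))"
    using assms(1) by (simp add: multi_idx_def sum_atMost_split_first flip: of_nat_sum)
  then show ?thesis
    using assms(2) by (simp add: grid_point_def sum_divide_distrib[symmetric] field_simps)
qed

lemma grid_point_in_std_simplex:
  assumes "\<beta> \<in> multi_idx n k"
  shows "grid_point n k \<beta> \<in> std_simplex n"
proof (cases "k = 0")
  case False
  then have "(\<Sum>i=1..n. grid_point n k \<beta> i) \<le> 1"
    using sum_grid_point[OF assms] by simp
  then show ?thesis by (auto simp: std_simplex_def grid_point_def)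
qed (simp add: std_simplex_def grid_point_def)

lemma bary_grid_point:
  assumes "\<beta> \<in> multi_idx n k" "0 < k" "i \<le> n"
  shows "bary n (grid_point n k \<beta>) i = real (\<beta> i) / real k"
  using sum_grid_point[OF assms(1,2)] assms(3) by (auto simp: bary_def grid_point_def)

lemma elev_coeff_le_bernstein_grid_point:
  assumes "\<alpha> \<in> multi_idx n l" "\<beta> \<in> multi_idx n k" "l \<le> k" "0 < k"
  shows "falling_fact k l * elev_coeff n l k \<alpha> \<beta> \<le> real k ^ l * bernstein n l \<alpha> (grid_point n k \<beta>)"
proof -
  define C :: real where "C = fact l / (\<Prod>i\<le>n. fact (\<alpha> i))"
  have "falling_fact k l * elev_coeff n l k \<alpha> \<beta> = C * (\<Prod>i\<le>n. falling_fact (\<beta> i) (\<alpha> i))"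
    using assms(2) falling_fact_pos[OF assms(3)] by (simp add: elev_coeff_def C_def)
  also have "\<dots> \<le> C * (\<Prod>i\<le>n. real (\<beta> i) ^ \<alpha> i)"
    unfolding C_def
    by (intro mult_left_mono prod_mono conjI falling_fact_nonneg falling_fact_le_power)
      (auto intro!: divide_nonneg_nonneg prod_nonneg)
  also have "\<dots> = real k ^ l * bernstein n l \<alpha> (grid_point n k \<beta>)"
  proof -
    have "(\<Prod>i\<le>n. bary n (grid_point n k \<beta>) i ^ \<alpha> i) = (\<Prod>i\<le>n. real (\<beta> i) ^ \<alpha> i) / real k ^ l"
      using bary_grid_point[OF assms(2,4)]
      by (simp add: power_divide prod_dividef prod_power_multi_idx[OF assms(1)])
    then show ?thesis using assms(4) by (simp add: bernstein_def C_def)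
  qed
  finally show ?thesis .
qed

lemma bern_coeff_elevated_lower_bound:
  assumes "is_poly_deg n l c" "l \<le> k" "0 < k" "\<beta> \<in> multi_idx n k"
    and "\<And>\<alpha>. \<alpha> \<in> multi_idx n l \<Longrightarrow> bern_coeff n c l \<alpha> \<le> M"
  shows "real k ^ l * peval n c (grid_point n k \<beta>) - M * (real k ^ l - falling_fact k l)
         \<le> falling_fact k l * bern_coeff n c k \<beta>"
proof -
  define b where "b = bern_coeff n c l"
  define K where "K = real k ^ l"
  define F where "F = falling_fact k l"
  define u where "u = (\<lambda>\<alpha>. K * bernstein n l \<alpha> (grid_point n k \<beta>))"
  define w where "w = (\<lambda>\<alpha>. F * elev_coeff n l k \<alpha> \<beta>)"
  have coeff: "F * bern_coeff n c k \<beta> = (\<Sum>\<alpha>\<in>multi_idx n l. b \<alpha> * w \<alpha>)"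
    by (simp add: bern_coeff_degree_elevation[OF assms(1,2)] b_def w_def sum_distrib_left mult_ac)
  have at_grid: "K * peval n c (grid_point n k \<beta>) = (\<Sum>\<alpha>\<in>multi_idx n l. b \<alpha> * u \<alpha>)"
    by (simp add: peval_eq_sum_bern_coeff[OF assms(1)] b_def u_def sum_distrib_left mult_ac)
  have mass: "(\<Sum>\<alpha>\<in>multi_idx n l. u \<alpha> - w \<alpha>) = K - F"
    by (simp add: sum_subtractf u_def w_def sum_distrib_left[symmetric] sum_bernstein
        sum_elev_coeff[OF assms(4,2)])
  have "K * peval n c (grid_point n k \<beta>) - F * bern_coeff n c k \<beta> =
      (\<Sum>\<alpha>\<in>multi_idx n l. b \<alpha> * (u \<alpha> - w \<alpha>))"
    by (simp add: coeff at_grid sum_subtractf right_diff_distrib)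
  also have "\<dots> \<le> (\<Sum>\<alpha>\<in>multi_idx n l. M * (u \<alpha> - w \<alpha>))"
  proof (intro sum_mono mult_right_mono)
    fix \<alpha> assume \<alpha>: "\<alpha> \<in> multi_idx n l"
    show "b \<alpha> \<le> M" using assms(5)[OF \<alpha>] by (simp add: b_def)
    show "0 \<le> u \<alpha> - w \<alpha>"
      using elev_coeff_le_bernstein_grid_point[OF \<alpha> assms(4,2,3)] by (simp add: u_def w_def K_def F_def)
  qed
  also have "\<dots> = M * (K - F)"
    by (simp add: mass sum_distrib_left[symmetric])
  finally show ?thesis by (simp add: K_def F_def)
qed

lemma bern_coeff_pos_of_large_degree:
  assumes "is_poly_deg n l c" "l \<le> k" "0 < k" "\<beta> \<in> multi_idx n k"
    and "\<And>x. x \<in> std_simplex n \<Longrightarrow> P \<le> peval n c x"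
    and "\<And>\<alpha>. \<alpha> \<in> multi_idx n l \<Longrightarrow> \<bar>bern_coeff n c l \<alpha>\<bar> \<le> M"
    and "real (l * (l - 1)) / 2 * M < real k * P"
  shows "0 < bern_coeff n c k \<beta>"
proof -
  define K where "K = real k ^ l"
  define F where "F = falling_fact k l"
  have "0 \<le> M" using assms(6)[OF vtx_in_multi_idx[of 0 n l]] by simp
  have "real k * (M * (K - F)) \<le> M * (K * (real (l * (l - 1)) / 2))"
    using power_minus_falling_fact_le[of k l] \<open>0 \<le> M\<close> unfolding K_def F_def
    by (subst mult.left_commute) (rule mult_left_mono)
  also have "\<dots> < K * (real k * P)"
    using assms(7) \<open>0 < k\<close> by (simp add: K_def mult_ac)
  also have "\<dots> \<le> real k * (K * peval n c (grid_point n k \<beta>))"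
    using assms(5)[OF grid_point_in_std_simplex[OF assms(4)]] \<open>0 < k\<close>
    by (simp add: K_def mult_left_mono)
  finally have "M * (K - F) < K * peval n c (grid_point n k \<beta>)"
    using \<open>0 < k\<close> by simp
  then have "0 < K * peval n c (grid_point n k \<beta>) - M * (K - F)" by simp
  also have "\<dots> \<le> F * bern_coeff n c k \<beta>"
    unfolding K_def F_def
    by (rule bern_coeff_elevated_lower_bound[OF assms(1-4)]) (use assms(6) in fastforce)
  finally show ?thesis
    using falling_fact_pos[OF assms(2)] by (simp add: F_def zero_less_mult_iff)
qed

lemma compact_std_simplex: "compact (std_simplex n)"
proof -
  define B where "B = PiE UNIV (\<lambda>i. if i \<in> {1..n} then {0..1} else {0::real})"
  have "compactin (product_topology (\<lambda>i. euclidean) UNIV) B"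
    unfolding B_def by (subst compactin_PiE) auto
  then have "compact B" by (simp add: euclidean_product_topology)
  moreover have "closed {x::nat \<Rightarrow> real. (\<Sum>i=1..n. x i) \<le> 1}"
    by (intro closed_Collect_le continuous_intros continuous_on_sum) auto
  moreover have "std_simplex n = B \<inter> {x. (\<Sum>i=1..n. x i) \<le> 1}"
  proof -
    have "x i \<le> 1" if "x \<in> std_simplex n" "i \<in> {1..n}" for x i
    proof -
      have "x i \<le> (\<Sum>i=1..n. x i)" using that by (intro member_le_sum) (auto simp: std_simplex_def)
      then show ?thesis using that(1) by (simp add: std_simplex_def)
    qed
    then show ?thesis by (auto simp: std_simplex_def B_def PiE_iff split: if_splits)
  qed
  ultimately show ?thesis by (simp add: compact_Int_closed)
qed

lemma continuous_on_peval: "continuous_on S (peval n c)"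
  unfolding peval_def[abs_def]
  by (intro continuous_intros) (auto intro: continuous_on_subset[OF continuous_on_product_coordinates])

lemma peval_min_on_std_simplex:
  obtains x0 where "x0 \<in> std_simplex n" "(INF x\<in>std_simplex n. peval n c x) = peval n c x0"
    "\<And>x. x \<in> std_simplex n \<Longrightarrow> peval n c x0 \<le> peval n c x"
proof -
  have "(\<lambda>_. 0) \<in> std_simplex n" by (simp add: std_simplex_def)
  then obtain x0 where "x0 \<in> std_simplex n" "\<forall>x\<in>std_simplex n. peval n c x0 \<le> peval n c x"
    using continuous_attains_inf[OF compact_std_simplex _ continuous_on_peval] by blast
  moreover from this have "(INF x\<in>std_simplex n. peval n c x) = peval n c x0"
    by (intro cInf_eq_minimum) auto
  ultimately show ?thesis using that by blast
qed

lemma degree_ge_of_bound: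
  fixes P M :: real
  assumes "0 < P" "P \<le> M" "real (l * (l - 1)) / 2 * M / P < real k"
  shows "l \<le> k" "0 < k"
proof -
  have "real (l * (l - 1)) / 2 * P \<le> real (l * (l - 1)) / 2 * M"
    using assms(2) by (intro mult_left_mono) auto
  then have "real (l * (l - 1)) / 2 \<le> real (l * (l - 1)) / 2 * M / P"
    using assms(1) by (simp add: le_divide_eq)
  moreover have "real l - 1 \<le> real (l * (l - 1)) / 2"
  proof (cases l)
    case (Suc m)
    have "real m \<le> real m * real m" by (metis le_square of_nat_le_iff of_nat_mult)
    then show ?thesis using Suc by (simp add: field_simps)
  qed simp
  ultimately show "l \<le> k" "0 < k" using assms(3) by linarith+
qed

text \<open>Only the positivity of the elevated coefficients of \<open>q\<close> is needed about the denominator.\<close>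

theorem corollary5p14:
  fixes n l k :: nat and p q :: mpoly
  assumes "is_poly_deg n l p" and "is_poly_deg n l q"
    and "\<forall>x\<in>std_simplex n. peval n p x / peval n q x > 0"
    and "\<forall>j\<ge>l. \<forall>\<alpha>\<in>multi_idx n j. bern_coeff n q j \<alpha> > 0"
    and "\<forall>x\<in>std_simplex n. peval n p x > 0"
    and "real k > real (l * (l - 1)) / 2 *
           Max ((\<lambda>\<alpha>. \<bar>bern_coeff n p l \<alpha>\<bar>) ` multi_idx n l)
           / (INF x\<in>std_simplex n. peval n p x)"
  shows "(\<forall>\<alpha>\<in>multi_idx n k. bern_coeff n p k \<alpha> / bern_coeff n q k \<alpha> \<ge> 0) \<and>
         (\<forall>i\<le>n. bern_coeff n p k (vtx k i) / bern_coeff n q k (vtx k i) > 0)"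
proof -
  define P where "P = (INF x\<in>std_simplex n. peval n p x)"
  define M where "M = Max ((\<lambda>\<alpha>. \<bar>bern_coeff n p l \<alpha>\<bar>) ` multi_idx n l)"
  obtain x0 where x0: "x0 \<in> std_simplex n" "P = peval n p x0"
    and P_le: "\<And>x. x \<in> std_simplex n \<Longrightarrow> P \<le> peval n p x"
    using peval_min_on_std_simplex[of n p] unfolding P_def by metis
  have "0 < P" using assms(5) x0 by simp
  have M_ge: "\<bar>bern_coeff n p l \<alpha>\<bar> \<le> M" if "\<alpha> \<in> multi_idx n l" for \<alpha>
    unfolding M_def using that by (intro Max_ge finite_imageI finite_multi_idx) auto
  have "P \<le> M"
    using x0 M_ge by (metis abs_le_D1 peval_le_of_bern_coeff_le[OF assms(1) x0(1)])
  then have "l \<le> k" "0 < k"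
    using degree_ge_of_bound[OF \<open>0 < P\<close>] assms(6) unfolding P_def M_def by blast+
  have "real (l * (l - 1)) / 2 * M < real k * P"
    using assms(6) \<open>0 < P\<close> by (simp add: P_def M_def divide_less_eq mult.commute)
  then have p_pos: "0 < bern_coeff n p k \<beta>" if "\<beta> \<in> multi_idx n k" for \<beta>
    using bern_coeff_pos_of_large_degree[OF assms(1) \<open>l \<le> k\<close> \<open>0 < k\<close> that P_le M_ge] by blast
  have q_pos: "0 < bern_coeff n q k \<beta>" if "\<beta> \<in> multi_idx n k" for \<beta>
    using assms(4) \<open>l \<le> k\<close> that by blast
  show ?thesis
    using p_pos q_pos vtx_in_multi_idx by (auto intro: less_imp_le)
qed

end
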